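(* (i) For every integer $q\in\{1,\dots,6\}$, the optimal value $A_q$ of the linear program in real variables $\omega_1,\dots,\omega_6,\chi$ — maximize $\frac{q}{q+1}\cdot\frac78\chi-\sum_{j=1}^q\frac{\omega_j}{j(j+1)}$ subject to $\omega_i\le\omega_{i+1}$ ($i=1,\dots,5$), $\chi-\omega_1\le1$, $2\chi-\omega_2-\omega_3\le1$, $3\chi-3\omega_5\le1$, $\chi\ge2$, $\omega_q\le\frac78\chi$ — satisfies $A_q\le\frac12$. (ii) For every pair of integers $(p,q)$ with $1\le p\le5$ and $p\le q\le10$, the optimal value $B_{p,q}$ of the linear program in real variables $\omega_1,\dots,\omega_{10},\chi$ — maximize $\frac1p+\left(\frac{q}{q+1}\cdot\frac78-\frac12\right)\chi-\sum_{j=p}^q\frac{\omega_j}{j(j+1)}$ subject to $\omega_i\le\omega_{i+1}$ ($i=1,\dots,9$), $\chi-\omega_1\le1$, $2\chi-\omega_2-\omega_3\le1$, $3\chi-\omega_3-\omega_4-\omega_5\le1$, $4\chi-4\omega_7\le1$, $\omega_{p-1}\le1$ (omitted when $p=1$), $\omega_p\ge1$, $\omega_q\le\frac78\chi$ — satisfies $B_{p,q}\le\frac12$. (iii) Consequently, for every edge-colored graph $H$, every feasible solution $x$ of the \textsc{MinECC} LP relaxation, and every edge $e$ with $x_e=\max_{w\in e}x_w^{\ell(e)}\in(\frac18,\frac34)$, the output $Y$ of GenColorRound applied to $x$ with $I=(\frac12,\frac78)$ satisfies $\Pr[e\in\mathcal M_Y]\le\frac43x_e$.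
   Context: An edge-colored graph is $H=(V,E,C,\ell)$ with colors $C=[k]$, $\ell\colon E\to C$, every edge a set of exactly two nodes. A node coloring $Y\colon V\to C$ makes a mistake at $e$ ($e\in\mathcal M_Y$) if some $w\in e$ has $Y[w]\ne\ell(e)$. The \textsc{MinECC} LP relaxation constraints: $\sum_{i=1}^k x_w^i=k-1$ for all $w\in V$; $x_e\ge x_w^{\ell(e)}$ for $w\in e$; $0\le x_w^i\le1$; $0\le x_e\le 1$. GenColorRound with interval $I$, applied to $x$: draw $\rho$ uniformly from $I$ and, independently, a uniformly random permutation $\pi$ of $[k]$; let $S_i=\{w: x_w^i<\rho\}$; for $w\in\bigcup_iS_i$ set $Y[w]=\pi(j)$ with $j$ the largest index such that $w\in S_{\pi(j)}$; other nodes get an arbitrary color. *)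

theory Defs
  imports "HOL-Probability.Probability" "HOL-Combinatorics.Permutations"
begin

definition edge_colored_graph :: "'v set \<Rightarrow> 'v set set \<Rightarrow> nat \<Rightarrow> ('v set \<Rightarrow> nat) \<Rightarrow> bool" where
  "edge_colored_graph V E k ell \<longleftrightarrow> finite V \<and> k \<ge> 1 \<and>
     (\<forall>e\<in>E. e \<subseteq> V \<and> card e = 2 \<and> ell e \<in> {1..k})"

text \<open>Feasibility for the MinECC LP relaxation; xv w i = x_w^i, xe e = x_e.\<close>
definition minecc_lp_feasible ::
  "'v set \<Rightarrow> 'v set set \<Rightarrow> nat \<Rightarrow> ('v set \<Rightarrow> nat) \<Rightarrow> ('v \<Rightarrow> nat \<Rightarrow> real) \<Rightarrow> ('v set \<Rightarrow> real) \<Rightarrow> bool" where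
  "minecc_lp_feasible V E k ell xv xe \<longleftrightarrow>
     (\<forall>w\<in>V. (\<Sum>i=1..k. xv w i) = real k - 1) \<and>
     (\<forall>e\<in>E. \<forall>w\<in>e. xe e \<ge> xv w (ell e)) \<and>
     (\<forall>w\<in>V. \<forall>i\<in>{1..k}. 0 \<le> xv w i \<and> xv w i \<le> 1) \<and>
     (\<forall>e\<in>E. 0 \<le> xe e \<and> xe e \<le> 1)"

text \<open>GenColorRound output for threshold rho and permutation prm of {1..k};
  S_i = {w. xv w i < rho}; nodes in no S_i receive the arbitrary color dflt rho prm w.\<close>
definition gcr_color ::
  "nat \<Rightarrow> ('v \<Rightarrow> nat \<Rightarrow> real) \<Rightarrow> (real \<Rightarrow> (nat \<Rightarrow> nat) \<Rightarrow> 'v \<Rightarrow> nat) \<Rightarrow> real \<Rightarrow> (nat \<Rightarrow> nat) \<Rightarrow> 'v \<Rightarrow> nat" where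
  "gcr_color k xv dflt rho prm w =
     (if \<exists>i\<in>{1..k}. xv w i < rho
      then prm (GREATEST j. j \<in> {1..k} \<and> xv w (prm j) < rho)
      else dflt rho prm w)"

definition mistake :: "('v \<Rightarrow> nat) \<Rightarrow> ('v set \<Rightarrow> nat) \<Rightarrow> 'v set \<Rightarrow> bool" where
  "mistake Y ell e \<longleftrightarrow> (\<exists>w\<in>e. Y w \<noteq> ell e)"

definition gcr_space :: "real \<Rightarrow> real \<Rightarrow> nat \<Rightarrow> (real \<times> (nat \<Rightarrow> nat)) measure" where
  "gcr_space a b k = uniform_measure lborel {a<..<b} \<Otimes>\<^sub>M uniform_count_measure {prm. prm permutes {1..k}}"

definition gcr_mistake_prob ::
  "real \<Rightarrow> real \<Rightarrow> nat \<Rightarrow> ('v \<Rightarrow> nat \<Rightarrow> real) \<Rightarrow> (real \<Rightarrow> (nat \<Rightarrow> nat) \<Rightarrow> 'v \<Rightarrow> nat) \<Rightarrow> ('v set \<Rightarrow> nat) \<Rightarrow> 'v set \<Rightarrow> real" where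
  "gcr_mistake_prob a b k xv dflt ell e =
     measure (gcr_space a b k)
       {(rho, prm) \<in> space (gcr_space a b k). mistake (gcr_color k xv dflt rho prm) ell e}"

definition lpA_feasible :: "nat \<Rightarrow> (nat \<Rightarrow> real) \<Rightarrow> real \<Rightarrow> bool" where
  "lpA_feasible q w chi \<longleftrightarrow>
     (\<forall>i\<in>{1..5}. w i \<le> w (i+1)) \<and> chi - w 1 \<le> 1 \<and> 2*chi - w 2 - w 3 \<le> 1 \<and>
     3*chi - 3* w 5 \<le> 1 \<and> chi \<ge> 2 \<and> w q \<le> 7/8 * chi"

definition lpA_obj :: "nat \<Rightarrow> (nat \<Rightarrow> real) \<Rightarrow> real \<Rightarrow> real" where
  "lpA_obj q w chi = real q / (real q + 1) * (7/8) * chi - (\<Sum>j=1..q. w j / (real j * (real j + 1)))"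

definition lpB_feasible :: "nat \<Rightarrow> nat \<Rightarrow> (nat \<Rightarrow> real) \<Rightarrow> real \<Rightarrow> bool" where
  "lpB_feasible p q w chi \<longleftrightarrow>
     (\<forall>i\<in>{1..9}. w i \<le> w (i+1)) \<and> chi - w 1 \<le> 1 \<and> 2*chi - w 2 - w 3 \<le> 1 \<and>
     3*chi - w 3 - w 4 - w 5 \<le> 1 \<and> 4*chi - 4* w 7 \<le> 1 \<and>
     (p \<noteq> 1 \<longrightarrow> w (p-1) \<le> 1) \<and> w p \<ge> 1 \<and> w q \<le> 7/8 * chi"

definition lpB_obj :: "nat \<Rightarrow> nat \<Rightarrow> (nat \<Rightarrow> real) \<Rightarrow> real \<Rightarrow> real" where
  "lpB_obj p q w chi = 1 / real p + (real q / (real q + 1) * (7/8) - 1/2) * chi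
      - (\<Sum>j=p..q. w j / (real j * (real j + 1)))"

end

theory Submission
  imports Defs
begin

text \<open>
  Parts (i) and (ii) are finitely many small linear programs; after expanding the finite sums,
  linear arithmetic finds a dual certificate for each of them.

  For (iii), let e = {u, v} have colour c and t = x_e. Call a draw good if \<rho> > t and c comes
  last in \<pi> among the colours lying below \<rho> at u or at v; then both endpoints receive c.
  Given \<rho> > t, c comes last with probability 1/|U(\<rho>)|, where |U(\<rho>)| \<le> 1 + n(\<rho>) and n(\<rho>)
  counts the other colours below \<rho> at u and at v. Since the sum of 1 - x_w^i over i \<noteq> c equals x_w^c \<le> t,
  any such colour forces \<rho> > 1 - t, and the same budget bounds the expectation of n(\<rho>).
  Bounding 1/(1 + n) from below by a chord of this convex function and integrating over \<rho>
  gives Pr[good] \<ge> 1 - 4t/3 in each of the ranges t \<le> 1/2, 1/2 < t \<le> 5/8 and 5/8 < t.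
\<close>

lemma lpA_obj_le_half:
  assumes "q \<in> {1..6}" "lpA_feasible q w chi"
  shows "lpA_obj q w chi \<le> 1/2"
  using assms unfolding lpA_feasible_def lpA_obj_def
  by (simp add: Icc_eq_insert_lb_nat del: One_nat_def; elim disjE;
      simp add: Icc_eq_insert_lb_nat del: One_nat_def)

lemma lpB_obj_le_half:
  assumes "1 \<le> p" "p \<le> 5" "p \<le> q" "q \<le> 10" "lpB_feasible p q w chi"
  shows "lpB_obj p q w chi \<le> 1/2"
proof -
  have "p \<in> {1..5}" "q \<in> {1..10}" using assms by auto
  then show ?thesis using assms(3,5) unfolding lpB_feasible_def lpB_obj_def
    by (simp add: Icc_eq_insert_lb_nat del: One_nat_def; elim disjE;
        simp add: Icc_eq_insert_lb_nat del: One_nat_def)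
qed

lemma chord_le_inverse_Suc:
  fixes m n :: nat
  shows "(2 * m + 2 - real n) / ((m + 1) * (m + 2)) \<le> 1 / (1 + real n)"
proof -
  have "0 \<le> (real n - m) * (real n - m - 1)"
    by (cases "n \<le> m") (auto intro: mult_nonpos_nonpos mult_nonneg_nonneg)
  then have "(2 * m + 2 - real n) * (1 + real n) \<le> (m + 1) * (m + 2)"
    by (simp add: algebra_simps)
  moreover have "0 < real ((m + 1) * (m + 2))" by (simp only: of_nat_0_less_iff) simp
  moreover have "0 < 1 + real n" by simp
  ultimately show ?thesis
    by (simp add: field_simps)
qed

lemma
  fixes a b x :: real
  assumes "a < b"
  shows integrable_uniform_indicator_greaterThan:
      "integrable (uniform_measure lborel {a<..<b}) (indicator {x<..} :: real \<Rightarrow> real)"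
    and integral_uniform_indicator_greaterThan:
      "integral\<^sup>L (uniform_measure lborel {a<..<b}) (indicator {x<..} :: real \<Rightarrow> real)
         = max 0 (b - max x a) / (b - a)"
proof -
  interpret prob_space "uniform_measure lborel {a<..<b}"
    using assms by (intro prob_space_uniform_measure) auto
  show "integrable (uniform_measure lborel {a<..<b}) (indicator {x<..} :: real \<Rightarrow> real)"
    using emeasure_finite[of "{x<..}"] by (intro integrable_real_indicator) (auto simp: less_top)
  have "{a<..<b} \<inter> {x<..} = {max x a<..<b}" by auto
  moreover have "measure lborel {max x a<..<b} = max 0 (b - max x a)"
    by (cases "max x a \<le> b") auto
  ultimately show "integral\<^sup>L (uniform_measure lborel {a<..<b}) (indicator {x<..} :: real \<Rightarrow> real)
      = max 0 (b - max x a) / (b - a)"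
    using assms by simp
qed

text \<open>Each i with y i < b contributes at most b - r and uses up at least 1 - b of the budget T;
  the two bounds follow by counting such i.\<close>

lemma sum_shortfall_le:
  fixes y :: "'a \<Rightarrow> real"
  assumes "finite I" and "\<forall>i\<in>I. y i \<le> 1" and budget: "(\<Sum>i\<in>I. 1 - y i) \<le> T"
    and "r \<le> b" and "b \<le> 1"
  shows "(\<Sum>i\<in>I. max 0 (b - max r (y i))) \<le> max (b - r) (T - 2 * (1 - b))"
    and "(\<Sum>i\<in>I. max 0 (b - max r (y i))) \<le> max 0 (T - (1 - b))"
proof -
  define P where "P = {i\<in>I. y i < b}"
  have "finite P" "P \<subseteq> I" using assms(1) by (auto simp: P_def)
  have "(\<Sum>i\<in>I. max 0 (b - max r (y i))) = (\<Sum>i\<in>P. max 0 (b - max r (y i)))"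
    using \<open>P \<subseteq> I\<close> by (intro sum.mono_neutral_right assms(1)) (auto simp: P_def)
  moreover have "(\<Sum>i\<in>P. max 0 (b - max r (y i))) \<le> (\<Sum>i\<in>P. b - r)"
    using \<open>r \<le> b\<close> by (intro sum_mono) auto
  moreover have "(\<Sum>i\<in>P. max 0 (b - max r (y i))) \<le> (\<Sum>i\<in>P. (1 - y i) - (1 - b))"
    by (intro sum_mono) (auto simp: P_def)
  moreover have "(\<Sum>i\<in>P. 1 - y i) \<le> (\<Sum>i\<in>I. 1 - y i)"
    using assms(2) \<open>P \<subseteq> I\<close> by (intro sum_mono2 assms(1)) auto
  moreover have "(\<Sum>i\<in>P. (1 - y i) - (1 - b)) = (\<Sum>i\<in>P. 1 - y i) - card P * (1 - b)"
    by (simp add: sum_subtractf algebra_simps)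
  ultimately have by_count: "(\<Sum>i\<in>I. max 0 (b - max r (y i))) \<le> card P * (b - r)"
    "(\<Sum>i\<in>I. max 0 (b - max r (y i))) \<le> T - card P * (1 - b)"
    using budget by auto
  have "real j * (1 - b) \<le> card P * (1 - b)" if "j \<le> card P" for j
    using that \<open>b \<le> 1\<close> by (intro mult_right_mono) auto
  from this[of 1] this[of 2] by_count \<open>r \<le> b\<close>
  show "(\<Sum>i\<in>I. max 0 (b - max r (y i))) \<le> max (b - r) (T - 2 * (1 - b))"
    and "(\<Sum>i\<in>I. max 0 (b - max r (y i))) \<le> max 0 (T - (1 - b))"
    by (cases "card P = 0"; cases "card P = 1"; simp)+
qed

text \<open>Reading p as the ordering p 1, p 2, ... of K, inv p l is the position of l.\<close>

definition permutes_last :: "'a :: linorder set \<Rightarrow> 'a set \<Rightarrow> 'a \<Rightarrow> ('a \<Rightarrow> 'a) set" where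
  "permutes_last K U m = {p. p permutes K \<and> (\<forall>l\<in>U. inv p l \<le> inv p m)}"

lemma card_permutes_last_eq:
  fixes K U :: "'a :: linorder set"
  assumes "U \<subseteq> K" "i \<in> U" "j \<in> U"
  shows "card (permutes_last K U i) = card (permutes_last K U j)"
proof -
  define \<tau> where "\<tau> = Transposition.transpose i j"
  have \<tau>: "\<tau> permutes K" unfolding \<tau>_def using assms by (intro permutes_swap_id) auto
  have \<tau>_U: "\<tau> ` U = U" unfolding \<tau>_def using assms(2,3) by simp
  have \<tau>_\<tau>: "\<tau> \<circ> (\<tau> \<circ> p) = p" "\<tau> (\<tau> m) = m" for p :: "'a \<Rightarrow> 'a" and m
    by (simp_all add: \<tau>_def fun_eq_iff)
  have maps: "\<tau> \<circ> p \<in> permutes_last K U (\<tau> m)" if "p \<in> permutes_last K U m" for p m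
  proof -
    have p: "p permutes K" "\<forall>l\<in>U. inv p l \<le> inv p m" using that by (auto simp: permutes_last_def)
    have "inv (\<tau> \<circ> p) = inv p \<circ> \<tau>"
      using o_inv_distrib[OF permutes_bij[OF \<tau>] permutes_bij[OF p(1)]] by (simp add: \<tau>_def)
    then have "\<forall>l\<in>\<tau> ` U. inv (\<tau> \<circ> p) l \<le> inv (\<tau> \<circ> p) (\<tau> m)"
      using p(2) by (simp add: \<tau>_\<tau>)
    then show ?thesis
      unfolding permutes_last_def \<tau>_U using permutes_compose[OF p(1) \<tau>] by simp
  qed
  have "\<tau> i = j" "\<tau> j = i" by (simp_all add: \<tau>_def)
  then have "bij_betw ((\<circ>) \<tau>) (permutes_last K U i) (permutes_last K U j)"
    using maps[of _ i] maps[of _ j]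
    by (intro bij_betw_byWitness[where f' = "(\<circ>) \<tau>"]) (auto simp: \<tau>_\<tau>)
  then show ?thesis by (rule bij_betw_same_card)
qed

lemma card_permutes_last:
  fixes K U :: "'a :: linorder set"
  assumes "finite K" "U \<subseteq> K" "c \<in> U"
  shows "card (permutes_last K U c) * card U = card {p. p permutes K}"
proof -
  have "finite U" using assms(1,2) by (rule finite_subset[rotated])
  have "finite (permutes_last K U m)" for m
    using finite_permutations[OF assms(1)]
    by (rule finite_subset[rotated]) (auto simp: permutes_last_def)
  have cover: "{p. p permutes K} = (\<Union>m\<in>U. permutes_last K U m)"
  proof (intro equalityI subsetI)
    fix p assume "p \<in> {p. p permutes K}"
    moreover obtain m where "m \<in> U" "inv p m = Max (inv p ` U)"
      using Max_in[of "inv p ` U"] \<open>finite U\<close> assms(3) by fastforce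
    moreover have "\<forall>l\<in>U. inv p l \<le> Max (inv p ` U)"
      using \<open>finite U\<close> by simp
    ultimately have "p \<in> permutes_last K U m" by (simp add: permutes_last_def)
    with \<open>m \<in> U\<close> show "p \<in> (\<Union>m\<in>U. permutes_last K U m)" by blast
  qed (auto simp: permutes_last_def)
  have disjoint: "permutes_last K U m \<inter> permutes_last K U m' = {}"
    if "m \<in> U" "m' \<in> U" "m \<noteq> m'" for m m'
  proof -
    have "inv p m \<noteq> inv p m'" if "p permutes K" for p
      using permutes_inj[OF permutes_inv[OF that]] \<open>m \<noteq> m'\<close> by (auto dest: injD)
    then show ?thesis using that by (fastforce simp: permutes_last_def)
  qed
  have "card {p. p permutes K} = (\<Sum>m\<in>U. card (permutes_last K U m))"
    unfolding cover using \<open>finite U\<close> \<open>\<And>m. finite (permutes_last K U m)\<close> disjoint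
    by (intro card_UN_disjoint) auto
  also have "\<dots> = (\<Sum>m\<in>U. card (permutes_last K U c))"
    using card_permutes_last_eq[OF assms(2) _ assms(3)] by (intro sum.cong) auto
  finally show ?thesis by simp
qed

lemma gcr_color_eq_last:
  assumes p: "p permutes {1..k}" and "c \<in> {1..k}" "xv w c < \<rho>"
    and last: "\<forall>i\<in>{1..k}. xv w i < \<rho> \<longrightarrow> inv p i \<le> inv p c"
  shows "gcr_color k xv dflt \<rho> p w = c"
proof -
  have "(GREATEST j. j \<in> {1..k} \<and> xv w (p j) < \<rho>) = inv p c"
  proof (rule Greatest_equality)
    show "inv p c \<in> {1..k} \<and> xv w (p (inv p c)) < \<rho>"
      using assms permutes_in_image[OF permutes_inv[OF p]] permutes_inverses(1)[OF p] by simp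
  next
    fix j assume "j \<in> {1..k} \<and> xv w (p j) < \<rho>"
    then have "inv p (p j) \<le> inv p c" using last permutes_in_image[OF p] by simp
    then show "j \<le> inv p c" using permutes_inverses(2)[OF p] by simp
  qed
  then show ?thesis
    using assms permutes_inverses(1)[OF p] unfolding gcr_color_def by auto
qed

lemma prob_space_gcr_space: "a < b \<Longrightarrow> prob_space (gcr_space a b k)"
  unfolding gcr_space_def
  by (intro prob_space_pair prob_space_uniform_measure prob_space_uniform_count_measure)
     (auto simp: finite_permutations intro: permutes_id)

locale edge_rounding =
  fixes k :: nat and xv :: "'v \<Rightarrow> nat \<Rightarrow> real" and u v :: 'v and c :: nat and t :: real
  assumes color_in: "c \<in> {1..k}"
    and color_le: "w \<in> {u, v} \<Longrightarrow> xv w c \<le> t"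
    and entry_le_one: "w \<in> {u, v} \<Longrightarrow> i \<in> {1..k} \<Longrightarrow> xv w i \<le> 1"
    and row_sum: "w \<in> {u, v} \<Longrightarrow> (\<Sum>i=1..k. xv w i) = real k - 1"
begin

definition others :: "nat set" where
  "others = {1..k} - {c}"

lemma sum_others_deficit:
  assumes "w \<in> {u, v}"
  shows "(\<Sum>i\<in>others. 1 - xv w i) = xv w c"
proof -
  have "(\<Sum>i=1..k. xv w i) = xv w c + (\<Sum>i\<in>others. xv w i)"
    unfolding others_def using color_in by (simp add: sum.remove)
  moreover have "real (card others) = real k - 1"
    unfolding others_def using color_in by (simp add: of_nat_diff)
  ultimately show ?thesis
    using row_sum[OF assms] by (simp add: sum_subtractf)
qed

lemma deficit_le:
  assumes "w \<in> {u, v}" "i \<in> others"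
  shows "1 - xv w i \<le> t"
proof -
  have "1 - xv w i \<le> (\<Sum>j\<in>others. 1 - xv w j)"
    using assms entry_le_one[OF assms(1)]
    by (intro member_le_sum) (auto simp: others_def)
  then show ?thesis using sum_others_deficit[OF assms(1)] color_le[OF assms(1)] by simp
qed

definition active :: "real \<Rightarrow> nat set" where
  "active \<rho> = {i\<in>{1..k}. xv u i < \<rho> \<or> xv v i < \<rho>}"

definition good :: "(real \<times> (nat \<Rightarrow> nat)) set" where
  "good = {(\<rho>, p). t < \<rho> \<and> p \<in> permutes_last {1..k} (active \<rho>) c}"

lemma good_colors_endpoints:
  assumes "(\<rho>, p) \<in> good" "w \<in> {u, v}"
  shows "gcr_color k xv dflt \<rho> p w = c"
  using assms color_in color_le[OF assms(2)]
  by (intro gcr_color_eq_last) (auto simp: good_def active_def permutes_last_def)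

definition last_prob :: "real \<Rightarrow> real" where
  "last_prob \<rho> = (if t < \<rho> then 1 / real (card (active \<rho>)) else 0)"

lemma color_active: "t < \<rho> \<Longrightarrow> c \<in> active \<rho>"
  using color_in color_le[of u] by (auto simp: active_def)

lemma card_active_pos: "t < \<rho> \<Longrightarrow> 0 < card (active \<rho>)"
  using color_active by (auto simp: active_def card_gt_0_iff)

lemma measure_good_slice:
  "measure (uniform_count_measure {p. p permutes {1..k}}) (Pair \<rho> -` good) = last_prob \<rho>"
proof (cases "t < \<rho>")
  case True
  have "Pair \<rho> -` good = permutes_last {1..k} (active \<rho>) c"
    using True by (auto simp: good_def)
  moreover have "active \<rho> \<subseteq> {1..k}" by (auto simp: active_def)
  ultimately have "card (Pair \<rho> -` good) * card (active \<rho>) = fact k"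
    using card_permutes_last[of "{1..k}" "active \<rho>" c] color_active[OF True]
    by (simp add: card_permutations)
  moreover have "Pair \<rho> -` good \<subseteq> {p. p permutes {1..k}}" by (auto simp: good_def permutes_last_def)
  ultimately show ?thesis
    using True card_active_pos[OF True]
    by (simp add: measure_uniform_count_measure finite_permutations card_permutations
        last_prob_def field_simps flip: of_nat_mult)
next
  case False
  then show ?thesis by (simp add: good_def last_prob_def)
qed

lemma good_in_sets: "good \<in> sets (gcr_space a b k)"
proof -
  have "{\<rho>. t < \<rho> \<and> (\<forall>i\<in>{1..k}. xv u i < \<rho> \<or> xv v i < \<rho> \<longrightarrow> inv p i \<le> inv p c)} \<in> sets borel"
    for p :: "nat \<Rightarrow> nat"
  proof -
    have "Measurable.pred borel
        (\<lambda>\<rho>. t < \<rho> \<and> (\<forall>i\<in>{1..k}. xv u i < \<rho> \<or> xv v i < \<rho> \<longrightarrow> inv p i \<le> inv p c))"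
      by measurable
    then show ?thesis by (simp add: pred_def)
  qed
  moreover have "good = (\<Union>p\<in>{p. p permutes {1..k}}.
      {\<rho>. t < \<rho> \<and> (\<forall>i\<in>{1..k}. xv u i < \<rho> \<or> xv v i < \<rho> \<longrightarrow> inv p i \<le> inv p c)} \<times> {p})"
    by (auto simp: good_def active_def permutes_last_def)
  ultimately show ?thesis
    unfolding gcr_space_def
    by (auto simp: finite_permutations sets_uniform_count_measure)
qed

lemma borel_measurable_last_prob: "last_prob \<in> borel_measurable borel"
proof -
  have "real (card (active \<rho>)) = (\<Sum>i=1..k. if xv u i < \<rho> \<or> xv v i < \<rho> then 1 else 0)" for \<rho>
    by (simp add: active_def sum.inter_filter[symmetric])
  then have "last_prob = (\<lambda>\<rho>. if t < \<rho>
      then 1 / (\<Sum>i=1..k. if xv u i < \<rho> \<or> xv v i < \<rho> then 1 else 0) else 0)"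
    by (simp add: last_prob_def fun_eq_iff)
  then show ?thesis by simp
qed

lemma last_prob_bounds: "0 \<le> last_prob \<rho>" "last_prob \<rho> \<le> 1"
  using card_active_pos[of \<rho>] by (auto simp: last_prob_def)

lemma integrable_last_prob:
  assumes "a < b"
  shows "integrable (uniform_measure lborel {a<..<b}) last_prob"
proof -
  interpret prob_space "uniform_measure lborel {a<..<b}"
    using assms by (intro prob_space_uniform_measure) auto
  have "borel_measurable (uniform_measure lborel {a<..<b}) = borel_measurable borel"
    by (intro measurable_cong_sets) auto
  then show ?thesis
    using last_prob_bounds borel_measurable_last_prob
    by (intro integrable_const_bound[where B = 1]) auto
qed

lemma measure_good:
  assumes "a < b"
  shows "measure (gcr_space a b k) good = integral\<^sup>L (uniform_measure lborel {a<..<b}) last_prob"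
proof -
  define M where "M = uniform_measure lborel {a<..<b}"
  define N where "N = uniform_count_measure {p. p permutes {1..k::nat}}"
  have space: "gcr_space a b k = M \<Otimes>\<^sub>M N" by (simp add: gcr_space_def M_def N_def)
  interpret N: prob_space N
    unfolding N_def
    by (intro prob_space_uniform_count_measure) (auto simp: finite_permutations intro: permutes_id)
  interpret MN: prob_space "M \<Otimes>\<^sub>M N"
    using prob_space_gcr_space[OF assms, of k] unfolding space .
  have "integrable M last_prob"
    unfolding M_def using assms by (rule integrable_last_prob)
  have "emeasure (M \<Otimes>\<^sub>M N) good = (\<integral>\<^sup>+\<rho>. emeasure N (Pair \<rho> -` good) \<partial>M)"
    using good_in_sets[of a b] unfolding space by (rule N.emeasure_pair_measure_alt)
  also have "\<dots> = (\<integral>\<^sup>+\<rho>. ennreal (last_prob \<rho>) \<partial>M)"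
    using measure_good_slice[folded N_def] by (simp add: N.emeasure_eq_measure)
  also have "\<dots> = ennreal (integral\<^sup>L M last_prob)"
    using \<open>integrable M last_prob\<close> last_prob_bounds by (intro nn_integral_eq_integral) auto
  finally show ?thesis
    using last_prob_bounds unfolding space M_def[symmetric]
    by (simp add: MN.emeasure_eq_measure integral_nonneg)
qed

definition below :: "'v \<Rightarrow> real \<Rightarrow> nat set" where
  "below w \<rho> = {i\<in>others. xv w i < \<rho>}"

text \<open>The number of other colours below \<rho> at u and at v, written with indicators so that it can
  be integrated over \<rho>; the max with t makes it vanish for \<rho> \<le> t.\<close>

definition count_below :: "real \<Rightarrow> real" where
  "count_below \<rho> = (\<Sum>i\<in>others. indicator {max t (xv u i)<..} \<rho> + indicator {max t (xv v i)<..} \<rho>)"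

lemma count_below_eq:
  assumes "t < \<rho>"
  shows "count_below \<rho> = card (below u \<rho>) + card (below v \<rho>)"
proof -
  have "indicator {max t (xv w i)<..} \<rho> = (if xv w i < \<rho> then 1 else 0 :: real)" for w i
    using assms by (simp add: indicator_def)
  then show ?thesis
    by (simp add: count_below_def below_def sum.distrib sum.inter_filter[symmetric] others_def)
qed

lemma count_below_eq_0: "\<not> t < \<rho> \<Longrightarrow> count_below \<rho> = 0"
  by (simp add: count_below_def indicator_def)

lemma card_active_le: "card (active \<rho>) \<le> 1 + card (below u \<rho>) + card (below v \<rho>)"
proof -
  have "finite (below u \<rho>)" "finite (below v \<rho>)" by (simp_all add: below_def others_def)
  moreover have "active \<rho> \<subseteq> insert c (below u \<rho> \<union> below v \<rho>)"
    by (auto simp: active_def below_def others_def)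
  ultimately have "card (active \<rho>) \<le> card (insert c (below u \<rho> \<union> below v \<rho>))"
    by (intro card_mono) auto
  also have "\<dots> \<le> 1 + card (below u \<rho> \<union> below v \<rho>)"
    by (simp add: card_insert_le_m1 card_insert_if)
  also have "\<dots> \<le> 1 + card (below u \<rho>) + card (below v \<rho>)"
    using card_Un_le by simp
  finally show ?thesis .
qed

lemma last_prob_ge: "t < \<rho> \<Longrightarrow> 1 / (1 + count_below \<rho>) \<le> last_prob \<rho>"
  using card_active_le[of \<rho>] card_active_pos[of \<rho>]
  by (simp add: last_prob_def count_below_eq frac_le)

lemma linear_le_last_prob:
  fixes A B \<delta> :: real
  assumes "0 \<le> B" and chord: "\<And>n::nat. A - B * of_bool (1 \<le> n) - \<delta> * real n \<le> 1 / (1 + real n)"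
  shows "A * indicator {t<..} \<rho> - B * indicator {1 - t<..} \<rho> - \<delta> * count_below \<rho> \<le> last_prob \<rho>"
proof (cases "t < \<rho>")
  case True
  define n where "n = card (below u \<rho>) + card (below v \<rho>)"
  have "1 - t < \<rho>" if "1 \<le> n"
  proof -
    from that have "below u \<rho> \<noteq> {} \<or> below v \<rho> \<noteq> {}" by (auto simp: n_def)
    then obtain w i where "w \<in> {u, v}" "i \<in> below w \<rho>" by blast
    then show ?thesis using deficit_le[of w i] by (auto simp: below_def)
  qed
  then have "B * of_bool (1 \<le> n) \<le> B * indicator {1 - t<..} \<rho>"
    using \<open>0 \<le> B\<close> by (auto simp: indicator_def)
  moreover have count: "count_below \<rho> = real n"
    using True by (simp add: count_below_eq n_def)
  ultimately have "A * indicator {t<..} \<rho> - B * indicator {1 - t<..} \<rho> - \<delta> * count_below \<rho>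
      \<le> A - B * of_bool (1 \<le> n) - \<delta> * real n"
    using True by simp
  also have "\<dots> \<le> 1 / (1 + count_below \<rho>)"
    using chord[of n] by (simp add: count)
  also have "\<dots> \<le> last_prob \<rho>" using last_prob_ge[OF True] .
  finally show ?thesis .
next
  case False
  then show ?thesis using \<open>0 \<le> B\<close> last_prob_bounds(1)[of \<rho>]
    by (simp add: count_below_eq_0 indicator_def)
qed

definition excess :: "'v \<Rightarrow> real" where
  "excess w = (\<Sum>i\<in>others. max 0 (7/8 - max (max t (1/2)) (xv w i)))"

lemma excess_le:
  assumes "w \<in> {u, v}" "t \<le> 7/8"
  shows "excess w \<le> max (7/8 - max t (1/2)) (t - 1/4)" and "excess w \<le> max 0 (t - 1/8)"
proof -
  have "finite others" "\<forall>i\<in>others. xv w i \<le> 1"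
    using entry_le_one[OF assms(1)] by (auto simp: others_def)
  moreover have "(\<Sum>i\<in>others. 1 - xv w i) \<le> t"
    using sum_others_deficit[OF assms(1)] color_le[OF assms(1)] by simp
  ultimately show "excess w \<le> max (7/8 - max t (1/2)) (t - 1/4)" "excess w \<le> max 0 (t - 1/8)"
    using sum_shortfall_le[of others "xv w" t "max t (1/2)" "7/8"] assms(2)
    by (simp_all add: excess_def)
qed

lemma
  shows integrable_count_below: "integrable (uniform_measure lborel {1/2<..<7/8}) count_below"
    and integral_count_below:
      "integral\<^sup>L (uniform_measure lborel {1/2<..<7/8}) count_below = 8/3 * (excess u + excess v)"
proof -
  have max_assoc: "max (max t x) (1/2) = max (max t (1/2)) x" for x :: real by linarith
  show "integrable (uniform_measure lborel {1/2<..<7/8}) count_below"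
    unfolding count_below_def
    by (intro Bochner_Integration.integrable_sum Bochner_Integration.integrable_add
        integrable_uniform_indicator_greaterThan) simp_all
  then show "integral\<^sup>L (uniform_measure lborel {1/2<..<7/8}) count_below = 8/3 * (excess u + excess v)"
    unfolding count_below_def excess_def
    by (simp add: integrable_uniform_indicator_greaterThan integral_uniform_indicator_greaterThan
        max_assoc sum.distrib sum_distrib_left distrib_left mult.commute
        del: Bochner_Integration.integral_indicator)
qed

lemma measure_good_ge_linear:
  fixes A B \<delta> :: real
  assumes "0 \<le> B" and chord: "\<And>n::nat. A - B * of_bool (1 \<le> n) - \<delta> * real n \<le> 1 / (1 + real n)"
  shows "8/3 * (A * max 0 (7/8 - max t (1/2)) - B * max 0 (7/8 - max (1 - t) (1/2))
           - \<delta> * (excess u + excess v)) \<le> measure (gcr_space (1/2) (7/8) k) good"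
proof -
  define M where "M = uniform_measure lborel {1/2<..<7/8::real}"
  define \<phi> where "\<phi> \<rho> = A * indicator {t<..} \<rho> - B * indicator {1 - t<..} \<rho> - \<delta> * count_below \<rho>"
    for \<rho> :: real
  have indicator: "integrable M (indicator {x<..} :: real \<Rightarrow> real)"
    "integral\<^sup>L M (indicator {x<..} :: real \<Rightarrow> real) = 8/3 * max 0 (7/8 - max x (1/2))" for x
    using integrable_uniform_indicator_greaterThan[of "1/2" "7/8" x]
      integral_uniform_indicator_greaterThan[of "1/2" "7/8" x]
    by (simp_all add: M_def del: Bochner_Integration.integral_indicator)
  have "integrable M \<phi>"
    using integrable_count_below indicator(1) unfolding \<phi>_def M_def[symmetric]
    by (intro Bochner_Integration.integrable_diff integrable_mult_right)
  moreover have "integrable M last_prob"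
    unfolding M_def by (rule integrable_last_prob) simp
  ultimately have "integral\<^sup>L M \<phi> \<le> integral\<^sup>L M last_prob"
    using linear_le_last_prob[OF assms] by (intro integral_mono) (auto simp: \<phi>_def)
  have "8/3 * (A * max 0 (7/8 - max t (1/2)) - B * max 0 (7/8 - max (1 - t) (1/2))
           - \<delta> * (excess u + excess v)) = integral\<^sup>L M \<phi>"
    using integrable_count_below integral_count_below unfolding \<phi>_def M_def[symmetric]
    by (simp add: indicator algebra_simps del: Bochner_Integration.integral_indicator)
  also have "\<dots> \<le> integral\<^sup>L M last_prob" by fact
  also have "\<dots> = measure (gcr_space (1/2) (7/8) k) good"
    by (simp add: measure_good M_def)
  finally show ?thesis .
qed

lemma measure_good_ge:
  assumes "1/8 < t" "t < 3/4"
  shows "1 - 4/3 * t \<le> measure (gcr_space (1/2) (7/8) k) good"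
proof -
  have chord2: "1/2 - real n / 12 \<le> 1 / (1 + real n)" for n :: nat
    using chord_le_inverse_Suc[of 2 n] by simp
  have chord3: "2/5 - real n / 20 \<le> 1 / (1 + real n)" for n :: nat
    using chord_le_inverse_Suc[of 3 n] by simp
  have excess: "excess w \<le> max (7/8 - max t (1/2)) (t - 1/4)" "excess w \<le> max 0 (t - 1/8)"
    if "w \<in> {u, v}" for w
    using excess_le[OF that] assms by auto
  consider "t \<le> 1/2" | "1/2 < t" "t \<le> 5/8" | "5/8 < t" by linarith
  then show ?thesis
  proof cases
    case 1
    have "1 - 1/2 * of_bool (1 \<le> n) - 1/12 * real n \<le> 1 / (1 + real n)" for n :: nat
      using chord2[of n] by (cases "n = 0") auto
    then have "8/3 * (1 * max 0 (7/8 - max t (1/2)) - 1/2 * max 0 (7/8 - max (1 - t) (1/2))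
        - 1/12 * (excess u + excess v)) \<le> measure (gcr_space (1/2) (7/8) k) good"
      by (intro measure_good_ge_linear) auto
    then show ?thesis
      using excess(2)[of u] excess(2)[of v] 1 assms by simp argo
  next
    case 2
    have "8/3 * (1/2 * max 0 (7/8 - max t (1/2)) - 0 * max 0 (7/8 - max (1 - t) (1/2))
        - 1/12 * (excess u + excess v)) \<le> measure (gcr_space (1/2) (7/8) k) good"
      using chord2 by (intro measure_good_ge_linear) auto
    moreover have "excess u \<le> 3/8" "excess v \<le> 3/8"
      using excess(1)[of u] excess(1)[of v] 2 by simp_all
    ultimately show ?thesis
      using 2 by simp argo
  next
    case 3
    have "8/3 * (2/5 * max 0 (7/8 - max t (1/2)) - 0 * max 0 (7/8 - max (1 - t) (1/2))
        - 1/20 * (excess u + excess v)) \<le> measure (gcr_space (1/2) (7/8) k) good"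
      using chord3 by (intro measure_good_ge_linear) auto
    moreover have "excess u \<le> t - 1/4" "excess v \<le> t - 1/4"
      using excess(1)[of u] excess(1)[of v] 3 by simp_all
    ultimately show ?thesis
      using 3 assms by simp argo
  qed
qed

end

lemma gcr_mistake_prob_le:
  assumes G: "edge_colored_graph V E k ell" and F: "minecc_lp_feasible V E k ell xv xe"
    and "e \<in> E" and xe_max: "xe e = Max ((\<lambda>w. xv w (ell e)) ` e)"
    and "1/8 < xe e" "xe e < 3/4"
  shows "gcr_mistake_prob (1/2) (7/8) k xv dflt ell e \<le> 4/3 * xe e"
proof -
  have "e \<subseteq> V" "card e = 2" "ell e \<in> {1..k}"
    using G \<open>e \<in> E\<close> by (auto simp: edge_colored_graph_def)
  then obtain u v where e: "e = {u, v}" by (meson card_2_iff)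
  interpret edge_rounding k xv u v "ell e" "xe e"
  proof
    show "xv w (ell e) \<le> xe e" if "w \<in> {u, v}" for w
      unfolding xe_max using that e by (intro Max_ge) auto
  qed (use \<open>ell e \<in> {1..k}\<close> \<open>e \<subseteq> V\<close> e F in \<open>auto simp: minecc_lp_feasible_def\<close>)
  interpret prob_space "gcr_space (1/2) (7/8) k"
    by (rule prob_space_gcr_space) simp
  text \<open>The mistake event need not be measurable: it lies in the measurable complement of
    the good event, on which the measure is monotone.\<close>
  have "{(\<rho>, p) \<in> space (gcr_space (1/2) (7/8) k). mistake (gcr_color k xv dflt \<rho> p) ell e}
      \<subseteq> space (gcr_space (1/2) (7/8) k) - good"
    using good_colors_endpoints by (auto simp: mistake_def e)
  then have "gcr_mistake_prob (1/2) (7/8) k xv dflt ell e \<le> 1 - measure (gcr_space (1/2) (7/8) k) good"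
    unfolding gcr_mistake_prob_def prob_compl[OF good_in_sets, symmetric]
    by (intro finite_measure_mono) (auto intro: good_in_sets)
  then show ?thesis
    using measure_good_ge \<open>1/8 < xe e\<close> \<open>xe e < 3/4\<close> by fastforce
qed

theorem lemma6:
  shows "(\<forall>q\<in>{1..6::nat}. \<forall>w chi. lpA_feasible q w chi \<longrightarrow> lpA_obj q w chi \<le> 1/2)
   \<and> (\<forall>p q::nat. 1 \<le> p \<and> p \<le> 5 \<and> p \<le> q \<and> q \<le> 10 \<longrightarrow>
        (\<forall>w chi. lpB_feasible p q w chi \<longrightarrow> lpB_obj p q w chi \<le> 1/2))
   \<and> (\<forall>(V::'v set) E k ell xv xe e dflt.
        edge_colored_graph V E k ell \<and> minecc_lp_feasible V E k ell xv xe \<and> e \<in> E \<and>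
        xe e = Max ((\<lambda>w. xv w (ell e)) ` e) \<and> 1/8 < xe e \<and> xe e < 3/4 \<and>
        (\<forall>rho prm w. dflt rho prm w \<in> {1..k}) \<and>
        (\<forall>prm w. (\<lambda>rho. dflt rho prm w) \<in> borel_measurable borel) \<longrightarrow>
        gcr_mistake_prob (1/2) (7/8) k xv dflt ell e \<le> 4/3 * xe e)"
  using lpA_obj_le_half lpB_obj_le_half gcr_mistake_prob_le by blast

end
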